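(* Let $R$ be a commutative ring with identity, $n>1$, $S=M_n(R)$. If $A\in S$ and $c\in R$ is a nonzero element with $c\det A=0$, then there exists a nonzero matrix $C\in cS=\{cX: X\in S\}$ with $AC=CA=0$. *)

theory Defs
  imports "HOL-Analysis.Analysis"
begin

end

theory Submission
  imports Defs "Jordan_Normal_Form.Determinant"
begin

text \<open>Let \<open>d\<close> range over the nonzero multiples of \<open>c\<close>, and let \<open>t(d)\<close> be the largest \<open>t\<close> such that
  \<open>d\<close> does not annihilate all \<open>t \<times> t\<close> minors of \<open>A\<close> (the empty minor is \<open>1\<close>). As \<open>c\<close> kills
  \<open>det A\<close>, it kills every \<open>n \<times> n\<close> minor, so \<open>t(d) < n\<close>. Choose \<open>d\<close> with \<open>t = t(d)\<close> minimal and a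
  \<open>t\<close>-minor \<open>M\<close> with \<open>d M \<noteq> 0\<close>; minimality applied to \<open>d M\<close> yields a \<open>t\<close>-minor \<open>M'\<close> with
  \<open>d M M' \<noteq> 0\<close>. Enlarge \<open>M\<close> to a \<open>(t+1)\<close>-minor by an arbitrary row and a fresh column; the
  cofactors along the new row, placed at their columns, form a vector \<open>v\<close> with \<open>d A v = 0\<close> by
  Laplace expansion, and \<open>M\<close> is the entry of \<open>v\<close> at the fresh column. Dually \<open>M'\<close> gives \<open>w\<close>
  with \<open>d w\<^sup>T A = 0\<close>, so \<open>C = d v w\<^sup>T\<close> works.\<close>

hide_const (open) Determinant.det
no_notation Matrix.vec_index (infixl "$" 100)

text \<open>Rows and columns are selected by arbitrary index maps; repeated indices give vanishing
  minors, which spares the bookkeeping of increasing index sequences.\<close>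

definition minor_mat :: "'a::comm_ring_1^'n^'n \<Rightarrow> nat \<Rightarrow> (nat \<Rightarrow> 'n) \<Rightarrow> (nat \<Rightarrow> 'n) \<Rightarrow> 'a mat" where
  "minor_mat A t f g = mat t t (\<lambda>(i, j). A $ f i $ g j)"

lemma minor_mat_carrier [simp]: "minor_mat A t f g \<in> carrier_mat t t"
  by (simp add: minor_mat_def)

lemma det_minor_mat_not_inj:
  assumes "\<not> inj_on f {0..<t} \<or> \<not> inj_on g {0..<t}"
  shows "Determinant.det (minor_mat A t f g) = 0"
  using assms
proof
  assume "\<not> inj_on f {0..<t}"
  then obtain i j where ij: "i < t" "j < t" "i \<noteq> j" "f i = f j"
    unfolding inj_on_def by auto
  have "row (minor_mat A t f g) i = row (minor_mat A t f g) j"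
    using ij by (intro eq_vecI) (auto simp: minor_mat_def)
  with ij show ?thesis by (intro det_identical_rows[OF minor_mat_carrier, of i j]) auto
next
  assume "\<not> inj_on g {0..<t}"
  then obtain i j where ij: "i < t" "j < t" "i \<noteq> j" "g i = g j"
    unfolding inj_on_def by auto
  have "col (minor_mat A t f g) i = col (minor_mat A t f g) j"
    using ij by (intro eq_vecI) (auto simp: minor_mat_def)
  with ij show ?thesis by (intro det_identical_columns[OF minor_mat_carrier, of i j]) auto
qed

lemma det_minor_mat_bij:
  fixes A :: "'a::comm_ring_1^'n^'n"
  assumes bij: "bij_betw f {0..<CARD('n)} UNIV"
  shows "Determinant.det (minor_mat A CARD('n) f f) = det A"
proof -
  let ?S = "{0..<CARD('n)}"
  define h where "h = map_permutation ?S f"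
  have inj: "inj_on f ?S" using bij bij_betw_def by blast
  have h_bij: "bij_betw h {p. p permutes ?S} {q. q permutes (UNIV::'n set)}"
  proof (rule bij_betw_byWitness[where f' = "map_permutation UNIV (inv_into ?S f)"])
    show "\<forall>p\<in>{p. p permutes ?S}. map_permutation UNIV (inv_into ?S f) (h p) = p"
      unfolding h_def using map_permutation_compose_inv[OF bij] inj by (simp add: inv_into_f_f)
    show "\<forall>q\<in>{q. q permutes (UNIV::'n set)}. h (map_permutation UNIV (inv_into ?S f) q) = q"
      unfolding h_def using map_permutation_compose_inv[OF bij_betw_inv_into[OF bij]] bij
      by (simp add: bij_betw_def f_inv_into_f)
    show "h ` {p. p permutes ?S} \<subseteq> {q. q permutes UNIV}"
      unfolding h_def using map_permutation_permutes[OF bij] by auto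
    show "map_permutation UNIV (inv_into ?S f) ` {q. q permutes UNIV} \<subseteq> {p. p permutes ?S}"
      using map_permutation_permutes[OF bij_betw_inv_into[OF bij]] by auto
  qed
  have "det A = (\<Sum>p\<in>{p. p permutes ?S}. of_int (sign (h p)) * (\<Prod>x\<in>UNIV. A $ x $ h p x))"
    unfolding Determinants.det_def
    using sum.reindex_bij_betw[OF h_bij, of "\<lambda>q. of_int (sign q) * (\<Prod>x\<in>UNIV. A $ x $ q x)"]
    by simp
  also have "\<dots> = (\<Sum>p\<in>{p. p permutes ?S}. of_int (sign p) * (\<Prod>i\<in>?S. A $ f i $ f (p i)))"
  proof (rule sum.cong[OF refl])
    fix p assume p: "p \<in> {p. p permutes ?S}"
    have "sign (h p) = sign p" unfolding h_def
      by (rule sign_map_permutation) (use inj p in auto)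
    moreover have "(\<Prod>x\<in>UNIV. A $ x $ h p x) = (\<Prod>i\<in>?S. A $ f i $ h p (f i))"
      by (rule prod.reindex_bij_betw[OF bij, symmetric])
    moreover have "\<And>i. i \<in> ?S \<Longrightarrow> h p (f i) = f (p i)"
      unfolding h_def by (rule map_permutation_apply[OF inj])
    ultimately show "of_int (sign (h p)) * (\<Prod>x\<in>UNIV. A $ x $ h p x)
        = of_int (sign p) * (\<Prod>i\<in>?S. A $ f i $ f (p i))"
      by simp
  qed
  also have "\<dots> = Determinant.det (minor_mat A CARD('n) f f)"
    unfolding Determinant.det_def'[OF minor_mat_carrier]
    by (intro sum.cong refl prod.cong) (auto simp: minor_mat_def permutes_in_image)
  finally show ?thesis by simp
qed

text \<open>An \<open>n \<times> n\<close> minor with injective index maps is \<open>det A\<close> up to a row permutation.\<close>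

lemma det_dvd_det_minor_mat:
  fixes A :: "'a::comm_ring_1^'n^'n"
  shows "det A dvd Determinant.det (minor_mat A CARD('n) f g)"
proof (cases "inj_on f {0..<CARD('n)} \<and> inj_on g {0..<CARD('n)}")
  case False
  then show ?thesis by (simp add: det_minor_mat_not_inj)
next
  case True
  let ?S = "{0..<CARD('n)}"
  have bij_of_inj: "bij_betw h ?S UNIV" if "inj_on h {0..<CARD('n)}" for h :: "nat \<Rightarrow> 'n"
  proof -
    have "card (h ` ?S) = CARD('n)" using card_image[OF that] by simp
    then have "h ` ?S = UNIV" by (simp add: card_subset_eq)
    with that show ?thesis by (simp add: bij_betw_def)
  qed
  have f: "bij_betw f ?S UNIV" and g: "bij_betw g ?S UNIV"
    using True bij_of_inj by auto
  define \<sigma> where "\<sigma> i = (if i < CARD('n) then inv_into ?S g (f i) else i)" for i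
  have "bij_betw (inv_into ?S g \<circ> f) ?S ?S"
    by (rule bij_betw_trans[OF f bij_betw_inv_into[OF g]])
  then have "bij_betw \<sigma> ?S ?S"
    by (rule bij_betw_cong[THEN iffD1, rotated]) (auto simp: \<sigma>_def)
  then have \<sigma>: "\<sigma> permutes ?S"
    by (rule bij_imp_permutes) (auto simp: \<sigma>_def)
  have "g (\<sigma> i) = f i" "\<sigma> i < CARD('n)" if "i < CARD('n)" for i
    using that g permutes_in_image[OF \<sigma>, of i] by (auto simp: \<sigma>_def bij_betw_def f_inv_into_f)
  then have "minor_mat A CARD('n) f g
      = mat CARD('n) CARD('n) (\<lambda>(i, j). minor_mat A CARD('n) g g $$ (\<sigma> i, j))"
    by (intro eq_matI) (auto simp: minor_mat_def)
  then have "Determinant.det (minor_mat A CARD('n) f g) = signof \<sigma> * det A"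
    using det_permute_rows[OF minor_mat_carrier[of A _ g g] \<sigma>] det_minor_mat_bij[OF g, of A] by simp
  then show ?thesis by simp
qed

definition last_row_cofactors :: "'a::comm_ring_1^'n^'n \<Rightarrow> nat \<Rightarrow> (nat \<Rightarrow> 'n) \<Rightarrow> (nat \<Rightarrow> 'n) \<Rightarrow> 'a^'n"
  where "last_row_cofactors A t f g =
    (\<chi> j. \<Sum>k<Suc t. if g k = j then cofactor (minor_mat A (Suc t) f g) t k else 0)"

definition last_col_cofactors :: "'a::comm_ring_1^'n^'n \<Rightarrow> nat \<Rightarrow> (nat \<Rightarrow> 'n) \<Rightarrow> (nat \<Rightarrow> 'n) \<Rightarrow> 'a^'n"
  where "last_col_cofactors A t f g =
    (\<chi> i. \<Sum>k<Suc t. if f k = i then cofactor (minor_mat A (Suc t) f g) k t else 0)"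

lemma sum_mult_sum_if_eq:
  fixes h :: "nat \<Rightarrow> 'n::finite" and a :: "'n \<Rightarrow> 'a::semiring_0"
  shows "(\<Sum>j\<in>UNIV. a j * (\<Sum>k<m. if h k = j then b k else 0)) = (\<Sum>k<m. a (h k) * b k)"
proof -
  have "a j * (\<Sum>k<m. if h k = j then b k else 0) = (\<Sum>k<m. if h k = j then a (h k) * b k else 0)"
    for j unfolding sum_distrib_left by (rule sum.cong) auto
  then show ?thesis by (simp add: sum.swap[where A = UNIV])
qed

lemma matrix_vector_mult_last_row_cofactors:
  "A *v last_row_cofactors A t f g = (\<chi> r. Determinant.det (minor_mat A (Suc t) (f(t := r)) g))"
proof (rule Finite_Cartesian_Product.vec_eq_iff[THEN iffD2], rule allI)
  fix r
  let ?B = "minor_mat A (Suc t) (f(t := r)) g"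
  have "cofactor (minor_mat A (Suc t) f g) t k = cofactor ?B t k" for k
    unfolding cofactor_def
    by (rule arg_cong[where f = "\<lambda>M. _ * Determinant.det M"], rule eq_matI)
      (auto simp: mat_delete_def minor_mat_def)
  then have "(A *v last_row_cofactors A t f g) $ r = (\<Sum>k<Suc t. ?B $$ (t, k) * cofactor ?B t k)"
    by (simp add: matrix_vector_mult_def last_row_cofactors_def sum_mult_sum_if_eq minor_mat_def
        del: sum.lessThan_Suc)
  also have "\<dots> = Determinant.det ?B"
    by (rule laplace_expansion_row[symmetric]) auto
  finally show "(A *v last_row_cofactors A t f g) $ r
      = (\<chi> r. Determinant.det (minor_mat A (Suc t) (f(t := r)) g)) $ r"
    by simp
qed

lemma last_col_cofactors_vector_matrix_mult:
  "last_col_cofactors A t f g v* A = (\<chi> s. Determinant.det (minor_mat A (Suc t) f (g(t := s))))"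
proof (rule Finite_Cartesian_Product.vec_eq_iff[THEN iffD2], rule allI)
  fix s
  let ?B = "minor_mat A (Suc t) f (g(t := s))"
  have "cofactor (minor_mat A (Suc t) f g) k t = cofactor ?B k t" for k
    unfolding cofactor_def
    by (rule arg_cong[where f = "\<lambda>M. _ * Determinant.det M"], rule eq_matI)
      (auto simp: mat_delete_def minor_mat_def)
  then have "(last_col_cofactors A t f g v* A) $ s = (\<Sum>k<Suc t. ?B $$ (k, t) * cofactor ?B k t)"
    by (simp add: vector_matrix_mult_def last_col_cofactors_def sum_mult_sum_if_eq minor_mat_def
        mult.commute del: sum.lessThan_Suc)
  also have "\<dots> = Determinant.det ?B"
    by (rule laplace_expansion_column[symmetric]) auto
  finally show "(last_col_cofactors A t f g v* A) $ s
      = (\<chi> s. Determinant.det (minor_mat A (Suc t) f (g(t := s)))) $ s"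
    by simp
qed

lemma minor_mat_fun_upd_last [simp]:
  "minor_mat A t (f(t := i)) g = minor_mat A t f g"
  "minor_mat A t f (g(t := j)) = minor_mat A t f g"
  by (auto intro!: eq_matI simp: minor_mat_def)

lemma cofactor_last_minor_mat:
  "cofactor (minor_mat A (Suc t) f g) t t = Determinant.det (minor_mat A t f g)"
proof -
  have "mat_delete (minor_mat A (Suc t) f g) t t = minor_mat A t f g"
    by (rule eq_matI) (auto simp: mat_delete_def minor_mat_def)
  moreover have "(-1::'a) ^ (t + t) = 1"
    by (simp add: mult_2[symmetric] power_mult)
  ultimately show ?thesis by (simp add: cofactor_def)
qed

lemma last_row_cofactors_fresh:
  assumes "g t \<notin> g ` {..<t}"
  shows "last_row_cofactors A t f g $ g t = Determinant.det (minor_mat A t f g)"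
proof -
  have "(\<Sum>k<t. if g k = g t then cofactor (minor_mat A (Suc t) f g) t k else 0) = 0"
    using assms by (intro sum.neutral) (auto intro: rev_image_eqI)
  then have "last_row_cofactors A t f g $ g t = cofactor (minor_mat A (Suc t) f g) t t"
    by (simp add: last_row_cofactors_def)
  then show ?thesis by (simp add: cofactor_last_minor_mat)
qed

lemma last_col_cofactors_fresh:
  assumes "f t \<notin> f ` {..<t}"
  shows "last_col_cofactors A t f g $ f t = Determinant.det (minor_mat A t f g)"
proof -
  have "(\<Sum>k<t. if f k = f t then cofactor (minor_mat A (Suc t) f g) k t else 0) = 0"
    using assms by (intro sum.neutral) (auto intro: rev_image_eqI)
  then have "last_col_cofactors A t f g $ f t = cofactor (minor_mat A (Suc t) f g) t t"
    by (simp add: last_col_cofactors_def)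
  then show ?thesis by (simp add: cofactor_last_minor_mat)
qed

lemma exists_not_in_image_lessThan:
  fixes g :: "nat \<Rightarrow> 'n::finite"
  assumes "t < CARD('n)"
  shows "\<exists>j. j \<notin> g ` {..<t}"
proof -
  have "card (g ` {..<t}) < CARD('n)"
    using card_image_le[of "{..<t}" g] assms by simp
  then show ?thesis by (metis UNIV_I card_mono finite subsetI not_le)
qed

lemma matrix_mult_outer:
  "A ** (\<chi> i j. v $ i * w $ j) = (\<chi> i j. (A *v v) $ i * w $ j)"
  by (simp add: matrix_matrix_mult_def matrix_vector_mult_def sum_distrib_right ac_simps)

lemma outer_matrix_mult:
  "(\<chi> i j. v $ i * w $ j) ** A = (\<chi> i j. v $ i * (w v* A) $ j)"
  by (simp add: matrix_matrix_mult_def vector_matrix_mult_def sum_distrib_left ac_simps)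

definition annihilates_minors :: "'a::comm_ring_1^'n^'n \<Rightarrow> 'a \<Rightarrow> nat \<Rightarrow> bool" where
  "annihilates_minors A d t \<longleftrightarrow> (\<forall>f g. d * Determinant.det (minor_mat A t f g) = 0)"

lemma annihilates_minors_0_iff: "annihilates_minors A d 0 \<longleftrightarrow> d = 0"
  by (simp add: annihilates_minors_def)

lemma annihilates_minors_mult:
  "annihilates_minors A d t \<Longrightarrow> annihilates_minors A (d * e) t"
  by (simp add: annihilates_minors_def) (metis mult.commute mult.left_commute mult_zero_right)

lemma annihilates_minors_card:
  fixes A :: "'a::comm_ring_1^'n^'n"
  assumes "c * det A = 0"
  shows "annihilates_minors A c CARD('n)"
  unfolding annihilates_minors_def
proof (intro allI)
  fix f g
  obtain u where "Determinant.det (minor_mat A CARD('n) f g) = det A * u"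
    using det_dvd_det_minor_mat by (blast elim: dvdE)
  then show "c * Determinant.det (minor_mat A CARD('n) f g) = 0"
    using assms by (simp add: mult.assoc[symmetric])
qed

lemma rank_one_annihilator:
  fixes A :: "'a::comm_ring_1^'n^'n"
  assumes t: "t < CARD('n)"
    and annihilates: "annihilates_minors A d (Suc t)"
    and nonzero: "d * Determinant.det (minor_mat A t f g) * Determinant.det (minor_mat A t f' g') \<noteq> 0"
  shows "\<exists>v w :: 'a^'n. (\<chi> i j. d * v $ i * w $ j) \<noteq> 0
    \<and> A ** (\<chi> i j. d * v $ i * w $ j) = 0 \<and> (\<chi> i j. d * v $ i * w $ j) ** A = 0"
proof -
  obtain j0 where j0: "j0 \<notin> g ` {..<t}" using exists_not_in_image_lessThan[OF t] by blast
  obtain i0 where i0: "i0 \<notin> f' ` {..<t}" using exists_not_in_image_lessThan[OF t] by blast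
  define v where "v = last_row_cofactors A t f (g(t := j0))"
  define w where "w = last_col_cofactors A t (f'(t := i0)) g'"
  define dv where "dv = (\<chi> i. d * v $ i)"
  have C_eq: "(\<chi> i j. d * v $ i * w $ j) = (\<chi> i j. dv $ i * w $ j)"
    by (simp add: dv_def)
  have "A *v dv = (\<chi> r. d * (A *v v) $ r)"
    by (simp add: dv_def matrix_vector_mult_def sum_distrib_left ac_simps)
  then have "A *v dv = 0"
    using annihilates by (simp add: v_def matrix_vector_mult_last_row_cofactors
        annihilates_minors_def Finite_Cartesian_Product.vec_eq_iff)
  then have left: "A ** (\<chi> i j. dv $ i * w $ j) = 0"
    by (simp add: matrix_mult_outer Finite_Cartesian_Product.vec_eq_iff)
  have "dv $ i * (w v* A) $ j = v $ i * (d * (w v* A) $ j)" for i j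
    by (simp add: dv_def ac_simps)
  then have right: "(\<chi> i j. dv $ i * w $ j) ** A = 0"
    using annihilates by (simp add: outer_matrix_mult w_def last_col_cofactors_vector_matrix_mult
        annihilates_minors_def Finite_Cartesian_Product.vec_eq_iff)
  have "v $ j0 = Determinant.det (minor_mat A t f g)"
    using last_row_cofactors_fresh[of "g(t := j0)" t A f] j0 by (simp add: v_def)
  moreover have "w $ i0 = Determinant.det (minor_mat A t f' g')"
    using last_col_cofactors_fresh[of "f'(t := i0)" t A g'] i0 by (simp add: w_def)
  ultimately have "(\<chi> i j. dv $ i * w $ j) $ j0 $ i0 \<noteq> 0"
    using nonzero by (simp add: dv_def)
  then have "(\<chi> i j. dv $ i * w $ j) \<noteq> 0"
    by (metis zero_index)
  with left right have "(\<chi> i j. d * v $ i * w $ j) \<noteq> 0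
      \<and> A ** (\<chi> i j. d * v $ i * w $ j) = 0 \<and> (\<chi> i j. d * v $ i * w $ j) ** A = 0"
    unfolding C_eq by blast
  show ?thesis
    by (rule exI[of _ v], rule exI[of _ w]) fact
qed

definition max_nonannihilated_size :: "'a::comm_ring_1^'n^'n \<Rightarrow> 'a \<Rightarrow> nat" where
  "max_nonannihilated_size A d = Max {t. t \<le> CARD('n) \<and> \<not> annihilates_minors A d t}"

lemma max_nonannihilated_size_properties:
  fixes A :: "'a::comm_ring_1^'n^'n"
  assumes "d \<noteq> 0"
  shows max_nonannihilated_size_le: "max_nonannihilated_size A d \<le> CARD('n)"
    and not_annihilates_minors_max_nonannihilated_size:
      "\<not> annihilates_minors A d (max_nonannihilated_size A d)"
    and annihilates_minors_above_max_nonannihilated_size: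
      "max_nonannihilated_size A d < s \<Longrightarrow> s \<le> CARD('n) \<Longrightarrow> annihilates_minors A d s"
proof -
  let ?S = "{t. t \<le> CARD('n) \<and> \<not> annihilates_minors A d t}"
  have finite: "finite ?S" by (rule finite_subset[of _ "{..CARD('n)}"]) auto
  have "0 \<in> ?S" using assms by (simp add: annihilates_minors_0_iff)
  then have "max_nonannihilated_size A d \<in> ?S"
    unfolding max_nonannihilated_size_def using Max_in[OF finite] by blast
  then show "max_nonannihilated_size A d \<le> CARD('n)"
    and "\<not> annihilates_minors A d (max_nonannihilated_size A d)"
    by simp_all
  assume s: "max_nonannihilated_size A d < s" "s \<le> CARD('n)"
  have "s \<notin> ?S"
  proof
    assume "s \<in> ?S"
    then have "s \<le> max_nonannihilated_size A d"
      unfolding max_nonannihilated_size_def by (rule Max_ge[OF finite])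
    with s(1) show False by simp
  qed
  with s(2) show "annihilates_minors A d s" by simp
qed

lemma max_nonannihilated_size_mult_le:
  fixes A :: "'a::comm_ring_1^'n^'n"
  assumes "d * e \<noteq> 0"
  shows "max_nonannihilated_size A (d * e) \<le> max_nonannihilated_size A d"
proof (rule ccontr)
  assume "\<not> ?thesis"
  moreover have "d \<noteq> 0" using assms by auto
  ultimately have "annihilates_minors A d (max_nonannihilated_size A (d * e))"
    using max_nonannihilated_size_le[OF assms]
    by (intro annihilates_minors_above_max_nonannihilated_size) auto
  then show False
    using annihilates_minors_mult not_annihilates_minors_max_nonannihilated_size[OF assms] by blast
qed

lemma exists_nonannihilated_minor_pair:
  fixes A :: "'a::comm_ring_1^'n^'n"
  assumes "c \<noteq> 0" and "annihilates_minors A c CARD('n)"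
  shows "\<exists>d t f g f' g'. c dvd d \<and> t < CARD('n) \<and> annihilates_minors A d (Suc t)
    \<and> d * Determinant.det (minor_mat A t f g) * Determinant.det (minor_mat A t f' g') \<noteq> 0"
proof -
  let ?m = "max_nonannihilated_size A"
  have "\<exists>d. (d \<noteq> 0 \<and> c dvd d) \<and> (\<forall>e. e \<noteq> 0 \<and> c dvd e \<longrightarrow> ?m d \<le> ?m e)"
    using assms(1) by (intro ex_has_least_nat[where k = c]) simp
  then obtain d where d: "d \<noteq> 0" "c dvd d"
    and minimal: "\<And>e. e \<noteq> 0 \<Longrightarrow> c dvd e \<Longrightarrow> ?m d \<le> ?m e"
    by blast
  define t where "t = ?m d"
  have "annihilates_minors A d CARD('n)"
    using assms(2) d(2) by (auto elim!: dvdE intro: annihilates_minors_mult)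
  then have "t \<noteq> CARD('n)"
    using not_annihilates_minors_max_nonannihilated_size[where A = A, OF d(1)] by (auto simp: t_def)
  with max_nonannihilated_size_le[where A = A, OF d(1)] have t: "t < CARD('n)"
    by (simp add: t_def)
  have annihilates: "annihilates_minors A d (Suc t)"
    using t by (intro annihilates_minors_above_max_nonannihilated_size[where A = A, OF d(1)])
      (auto simp: t_def)
  obtain f g where M: "d * Determinant.det (minor_mat A t f g) \<noteq> 0"
    using not_annihilates_minors_max_nonannihilated_size[where A = A, OF d(1)]
    unfolding annihilates_minors_def t_def by blast
  define d' where "d' = d * Determinant.det (minor_mat A t f g)"
  have d': "d' \<noteq> 0" "c dvd d'"
    using M d(2) by (simp_all add: d'_def)
  have "?m d \<le> ?m d'"
    using minimal[OF d'] .
  moreover have "?m d' \<le> ?m d"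
    using max_nonannihilated_size_mult_le[where A = A, OF M] by (simp add: d'_def)
  ultimately have "?m d' = t"
    by (simp add: t_def)
  then obtain f' g' where "d' * Determinant.det (minor_mat A t f' g') \<noteq> 0"
    using not_annihilates_minors_max_nonannihilated_size[where A = A, OF d'(1)]
    unfolding annihilates_minors_def by auto
  with d(2) t annihilates show ?thesis
    unfolding d'_def by blast
qed

theorem corollary1:
  fixes A :: "'a::comm_ring_1 ^ 'n ^ 'n" and c :: 'a
  assumes "CARD('n) > 1"
    and "c \<noteq> 0"
    and "c * det A = 0"
  shows "\<exists>C. C \<noteq> 0 \<and> (\<exists>X :: 'a ^ 'n ^ 'n. C = (\<chi> i j. c * X $ i $ j))
            \<and> A ** C = 0 \<and> C ** A = 0"
proof -
  obtain d t f g f' g' where "c dvd d" "t < CARD('n)" "annihilates_minors A d (Suc t)"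
    "d * Determinant.det (minor_mat A t f g) * Determinant.det (minor_mat A t f' g') \<noteq> 0"
    using exists_nonannihilated_minor_pair[OF assms(2) annihilates_minors_card[OF assms(3)]]
    by blast
  note minors = this
  obtain v w :: "'a^'n" where C: "(\<chi> i j. d * v $ i * w $ j) \<noteq> 0"
    "A ** (\<chi> i j. d * v $ i * w $ j) = 0" "(\<chi> i j. d * v $ i * w $ j) ** A = 0"
    using rank_one_annihilator[OF minors(2-4)] by blast
  obtain x where x: "d = c * x"
    using minors(1) by (elim dvdE)
  show ?thesis
  proof (intro exI conjI)
    show "(\<chi> i j. d * v $ i * w $ j) = (\<chi> i j. c * (\<chi> i j. x * v $ i * w $ j) $ i $ j)"
      by (simp add: x mult.assoc)
  qed (fact C)+
qed

end
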